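(* Let $F,G:\mathbb{F}_{2^n}\to\mathbb{F}_{2^n}$ be CCZ-equivalent via the affine permutation $\mathcal{A}(u)=\begin{pmatrix}\mathcal{A}_{11}&\mathcal{A}_{12}\\ \mathcal{A}_{21}&\mathcal{A}_{22}\end{pmatrix}u+\begin{pmatrix}C\\ D\end{pmatrix}$ of $\mathbb{F}_{2^n}\times\mathbb{F}_{2^n}$, i.e. $\{(x,G(x)):x\in\mathbb{F}_{2^n}\}=\{\mathcal{A}(x,F(x)):x\in\mathbb{F}_{2^n}\}$. Then for all $a,b,c,d\in\mathbb{F}_{2^n}$, $$\mathrm{EBCT}_F(a,b,c,d)=\mathrm{EBCT}_G(\alpha,\beta,\gamma,\delta),$$ where $\alpha=\mathcal{A}_{12}b+\mathcal{A}_{11}a$, $\beta=\mathcal{A}_{22}b+\mathcal{A}_{21}a$, $\gamma=\mathcal{A}_{12}d+\mathcal{A}_{11}c$, $\delta=\mathcal{A}_{22}d+\mathcal{A}_{21}c$. Since the map $(a,b,c,d)\mapsto(\alpha,\beta,\gamma,\delta)$ is a bijection of $\mathbb{F}_{2^n}^4$, the multiset of EBCT entries (the EBCT spectrum) is preserved under CCZ-equivalence.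
   Context: Elements of $\mathbb{F}_{2^n}$ are identified with vectors of $\mathbb{F}_2^n$; $\mathcal{A}_{ij}:\mathbb{F}_{2^n}\to\mathbb{F}_{2^n}$ are $\mathbb{F}_2$-linear maps, $C,D\in\mathbb{F}_{2^n}$, and $\mathcal{A}$ is a bijection of $\mathbb{F}_{2^n}\times\mathbb{F}_{2^n}$. For any function $H:\mathbb{F}_{2^n}\to\mathbb{F}_{2^n}$ (not necessarily a permutation), $$\mathrm{EBCT}_H(a,b,c,d)=\left|\left\{X\in\mathbb{F}_{2^n} : H(X)+H(X+a)=b,\ H(X)+H(X+c)=d,\ H(X+a+c)+H(X+a)=d\right\}\right|.$$ *)

theory Defs
  imports Main "HOL-Library.Multiset" "HOL-Library.Cardinality"
begin

definition EBCT :: "('a::ab_group_add \<Rightarrow> 'a) \<Rightarrow> 'a \<Rightarrow> 'a \<Rightarrow> 'a \<Rightarrow> 'a \<Rightarrow> nat" where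
  "EBCT H a b c d = card {X. H X + H (X + a) = b \<and> H X + H (X + c) = d
                            \<and> H (X + a + c) + H (X + a) = d}"

text \<open>F_2-linearity on a group of characteristic 2 (scalars are only 0 and 1),
  i.e. additivity.\<close>
definition F2_linear :: "('a::ab_group_add \<Rightarrow> 'a) \<Rightarrow> bool" where
  "F2_linear L \<longleftrightarrow> (\<forall>x y. L (x + y) = L x + L y)"

definition affine_map2 ::
  "('a::ab_group_add \<Rightarrow> 'a) \<Rightarrow> ('a \<Rightarrow> 'a) \<Rightarrow> ('a \<Rightarrow> 'a) \<Rightarrow> ('a \<Rightarrow> 'a) \<Rightarrow> 'a \<Rightarrow> 'a
   \<Rightarrow> 'a \<times> 'a \<Rightarrow> 'a \<times> 'a" where
  "affine_map2 A11 A12 A21 A22 C D u =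
     (A11 (fst u) + A12 (snd u) + C, A21 (fst u) + A22 (snd u) + D)"

end

theory Submission
  imports Defs "HOL-Library.Product_Plus" "HOL-Number_Theory.Residues"
begin

text \<open>In characteristic 2 the three EBCT conditions say that the graph of H contains the
  translates of the graph point (X, H X) by (a, b), (c, d) and (a + c, b + d). An affine map
  whose image of the graph of F is the graph of G carries graph points to graph points and
  translations by q to translations by its linear part L q, so it matches the X counted by
  EBCT F a b c d bijectively with those counted by the table of G at L (a, b), L (c, d).
  Since L is bijective, the whole table of G is a reindexing of that of F.\<close>

lemma char_two_of_card_power_two:
  assumes "CARD('a::{finite, field}) = 2 ^ n"
  shows "(x::'a) + x = 0"
proof -
  have "prime CHAR('a)"
    by (rule prime_CHAR_semidom) (simp add: finite_imp_CHAR_pos)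
  moreover have "CHAR('a) dvd 2 ^ n"
    using CHAR_dvd_CARD[where 'a='a] assms by simp
  ultimately have "CHAR('a) = 2"
    by (metis prime_dvd_power primes_dvd_imp_eq two_is_prime_nat)
  then have "- x = x" by (rule uminus_CHAR_2)
  then show ?thesis by (metis add.right_inverse)
qed

lemma char_two_add_eq_iff:
  fixes x y z :: "'a::ab_group_add"
  assumes "\<And>x::'a. x + x = 0"
  shows "x + y = z \<longleftrightarrow> y = x + z"
  by (metis add.assoc add.left_neutral assms)

lemma EBCT_char_two:
  fixes H :: "'a::ab_group_add \<Rightarrow> 'a"
  assumes "\<And>x::'a. x + x = 0"
  shows "EBCT H a b c d =
    card {X. \<forall>(u, v) \<in> {(a, b), (c, d), (a + c, b + d)}. H (X + u) = H X + v}"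
proof -
  have "H X + H (X + a) = b \<and> H X + H (X + c) = d \<and> H (X + a + c) + H (X + a) = d
    \<longleftrightarrow> H (X + a) = H X + b \<and> H (X + c) = H X + d \<and> H (X + (a + c)) = H X + (b + d)" for X
    using char_two_add_eq_iff[OF assms] by (metis add.assoc add.commute)
  then show ?thesis
    unfolding EBCT_def by simp
qed

text \<open>No finiteness is needed: the two sets are matched by an injection, and if they are
  infinite both cardinalities are 0.\<close>

lemma card_graph_shifts_affine_image:
  fixes F :: "'a::plus \<Rightarrow> 'b::plus" and G :: "'c::plus \<Rightarrow> 'd::plus"
    and A L :: "'a \<times> 'b \<Rightarrow> 'c \<times> 'd"
  assumes inj: "inj A"
    and affine: "\<And>p q. A (p + q) = A p + L q"
    and graph: "range (\<lambda>x. (x, G x)) = A ` range (\<lambda>x. (x, F x))"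
  shows "card {X. \<forall>(u, v) \<in> Q. F (X + u) = F X + v}
       = card {Y. \<forall>(u, v) \<in> L ` Q. G (Y + u) = G Y + v}"
proof -
  define \<sigma> where "\<sigma> X = fst (A (X, F X))" for X
  have A_graph: "A (X, F X) = (\<sigma> X, G (\<sigma> X))" for X
  proof -
    have "A (X, F X) \<in> range (\<lambda>x. (x, G x))" using graph by blast
    then show ?thesis unfolding \<sigma>_def by auto
  qed
  have "y \<in> range \<sigma>" for y
  proof -
    have "(y, G y) \<in> A ` range (\<lambda>x. (x, F x))" using graph by blast
    then obtain x where "(y, G y) = A (x, F x)" by blast
    then show ?thesis by (simp add: A_graph)
  qed
  then have "surj \<sigma>" by blast
  have "inj \<sigma>"
    by (rule injI) (metis A_graph inj injD prod.inject)
  have shift: "F (X + u) = F X + v \<longleftrightarrow> G (\<sigma> X + fst (L (u, v))) = G (\<sigma> X) + snd (L (u, v))"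
    for X u v
  proof -
    have "F (X + u) = F X + v \<longleftrightarrow> A ((X, F X) + (u, v)) \<in> A ` range (\<lambda>x. (x, F x))"
      using inj by (auto simp: inj_image_mem_iff)
    also have "\<dots> \<longleftrightarrow> (\<sigma> X, G (\<sigma> X)) + L (u, v) \<in> range (\<lambda>x. (x, G x))"
      by (simp only: affine A_graph graph)
    finally show ?thesis
      by (auto simp: plus_prod_def)
  qed
  have "{Y. \<forall>(u, v) \<in> L ` Q. G (Y + u) = G Y + v}
      = \<sigma> ` {X. \<forall>(u, v) \<in> L ` Q. G (\<sigma> X + u) = G (\<sigma> X) + v}"
    using \<open>surj \<sigma>\<close> by (auto simp: image_iff)
  also have "\<dots> = \<sigma> ` {X. \<forall>(u, v) \<in> Q. F (X + u) = F X + v}"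
    by (simp add: shift case_prod_beta)
  finally show ?thesis
    using \<open>inj \<sigma>\<close> by (simp add: card_image inj_on_subset)
qed

definition block_map2 ::
  "('a::ab_group_add \<Rightarrow> 'a) \<Rightarrow> ('a \<Rightarrow> 'a) \<Rightarrow> ('a \<Rightarrow> 'a) \<Rightarrow> ('a \<Rightarrow> 'a) \<Rightarrow> 'a \<times> 'a \<Rightarrow> 'a \<times> 'a" where
  "block_map2 A11 A12 A21 A22 u = (A12 (snd u) + A11 (fst u), A22 (snd u) + A21 (fst u))"

lemma affine_map2_add:
  assumes "F2_linear A11" "F2_linear A12" "F2_linear A21" "F2_linear A22"
  shows "affine_map2 A11 A12 A21 A22 C D (p + q)
       = affine_map2 A11 A12 A21 A22 C D p + block_map2 A11 A12 A21 A22 q"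
  using assms by (simp add: affine_map2_def block_map2_def F2_linear_def plus_prod_def add_ac)

lemma inj_linear_part:
  fixes A L :: "'a::group_add \<Rightarrow> 'b::group_add"
  assumes "inj A" and "\<And>p q. A (p + q) = A p + L q"
  shows "inj L"
proof (rule injI)
  fix q q' assume "L q = L q'"
  then have "A (0 + q) = A (0 + q')" by (simp only: assms(2))
  then show "q = q'" using \<open>inj A\<close> by (simp add: injD)
qed

lemma bij_pair_map_pair:
  assumes "bij L"
  shows "bij (\<lambda>(a, b, c, d). (fst (L (a, b)), snd (L (a, b)), fst (L (c, d)), snd (L (c, d))))"
    (is "bij ?\<phi>")
proof (rule bijI)
  show "inj ?\<phi>"
  proof (rule injI)
    fix p q assume eq: "?\<phi> p = ?\<phi> q"
    obtain a b c d a' b' c' d' where "p = (a, b, c, d)" "q = (a', b', c', d')"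
      by (metis prod.exhaust)
    with eq have "L (a, b) = L (a', b')" "L (c, d) = L (c', d')"
      by (simp_all add: prod_eq_iff)
    with \<open>p = _\<close> \<open>q = _\<close> show "p = q"
      using bij_is_inj[OF assms] by (simp add: inj_eq)
  qed
  have "y \<in> range ?\<phi>" for y
  proof -
    obtain a' b' c' d' where y: "y = (a', b', c', d')"
      by (metis prod.exhaust)
    obtain ab cd where "L ab = (a', b')" "L cd = (c', d')"
      using bij_is_surj[OF assms] by (metis surjD)
    then have "?\<phi> (fst ab, snd ab, fst cd, snd cd) = y"
      by (simp add: y)
    then show ?thesis by (rule range_eqI[OF sym])
  qed
  then show "surj ?\<phi>" by (simp add: surj_def image_iff)
qed

lemma image_mset_mset_set_UNIV_reindex:
  fixes \<phi> :: "'a::finite \<Rightarrow> 'a"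
  assumes "bij \<phi>"
  shows "image_mset (f \<circ> \<phi>) (mset_set UNIV) = image_mset f (mset_set UNIV)"
proof -
  have "image_mset \<phi> (mset_set UNIV) = mset_set UNIV"
    using assms by (simp add: image_mset_mset_set bij_is_inj bij_is_surj)
  then show ?thesis
    by (metis image_mset.compositionality)
qed

theorem mainTheorem3:
  fixes F G :: "'a::{finite, field} \<Rightarrow> 'a"
    and A11 A12 A21 A22 :: "'a \<Rightarrow> 'a"
    and C D :: 'a
    and n :: nat
  assumes card: "CARD('a) = 2 ^ n"
    and lin: "F2_linear A11" "F2_linear A12" "F2_linear A21" "F2_linear A22"
    and bij: "bij (affine_map2 A11 A12 A21 A22 C D)"
    and ccz: "{(x, G x) | x. True} = {affine_map2 A11 A12 A21 A22 C D (x, F x) | x. True}"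
  shows "(\<forall>a b c d. EBCT F a b c d =
            EBCT G (A12 b + A11 a) (A22 b + A21 a) (A12 d + A11 c) (A22 d + A21 c))
       \<and> bij (\<lambda>(a, b, c, d). (A12 b + A11 a, A22 b + A21 a, A12 d + A11 c, A22 d + A21 c))
       \<and> image_mset (\<lambda>(a, b, c, d). EBCT F a b c d) (mset_set UNIV)
         = image_mset (\<lambda>(a, b, c, d). EBCT G a b c d) (mset_set UNIV)"
proof -
  let ?A = "affine_map2 A11 A12 A21 A22 C D" and ?L = "block_map2 A11 A12 A21 A22"
  let ?\<phi> = "\<lambda>(a, b, c, d). (A12 b + A11 a, A22 b + A21 a, A12 d + A11 c, A22 d + A21 c)"
  have char_two: "\<And>x::'a. x + x = 0" using char_two_of_card_power_two[OF card] .
  have graph: "range (\<lambda>x. (x, G x)) = ?A ` range (\<lambda>x. (x, F x))"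
    using ccz by (simp add: full_SetCompr_eq image_image)
  have shifts: "?L ` {(a, b), (c, d), (a + c, b + d)} = {(A12 b + A11 a, A22 b + A21 a),
      (A12 d + A11 c, A22 d + A21 c), (A12 b + A11 a + (A12 d + A11 c), A22 b + A21 a + (A22 d + A21 c))}"
    for a b c d
    using lin by (simp add: block_map2_def F2_linear_def add_ac)
  have table: "EBCT F a b c d = EBCT G (A12 b + A11 a) (A22 b + A21 a) (A12 d + A11 c) (A22 d + A21 c)"
    for a b c d
    using card_graph_shifts_affine_image[OF bij_is_inj[OF bij] affine_map2_add[OF lin] graph,
        of "{(a, b), (c, d), (a + c, b + d)}"]
    by (simp only: EBCT_char_two[OF char_two] shifts)
  have "bij ?L"
    using inj_linear_part[OF bij_is_inj[OF bij] affine_map2_add[OF lin]]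
    by (simp add: finite_UNIV_inj_surj bij_def)
  then have reindex: "bij ?\<phi>"
    using bij_pair_map_pair by (fastforce simp: block_map2_def)
  have "image_mset (\<lambda>(a, b, c, d). EBCT F a b c d) (mset_set UNIV)
      = image_mset ((\<lambda>(a, b, c, d). EBCT G a b c d) \<circ> ?\<phi>) (mset_set UNIV)"
    by (rule image_mset_cong) (auto simp: table)
  then show ?thesis
    using table reindex image_mset_mset_set_UNIV_reindex[OF reindex] by simp
qed

end
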